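(* Let $G=(V,E)$ be a network, $s,t\in V$, and $S\in[S_{min},1]$. Run the CO-TSCMQ algorithm on $G,s,t,S$. If there exists a survivable connection from $s$ to $t$ with survivability level at least $S$, the algorithm returns a survivable connection that is an optimal solution of the CO-Constrained Survivability Min-QoS problem. Otherwise, the algorithm fails.
   Context: A network is a directed graph $G=(V,E)$, $N=|V|$, $M=|E|$. Each link $e$ has a failure probability $p_e\in(0,p_{max}]$ with $p_{max}<1$, and a positive weight $w_e$. Paths are identified with their sets of links. $P^{(s,t)}$ is the set of simple $s$–$t$ paths, and $S_{min}=(1-p_{max})^M$. A survivable connection is a pair $(\pi_1,\pi_2)\in P^{(s,t)}\times P^{(s,t)}$; the two paths may coincide. Its survivability level is $\prod_{e\in\pi_1\cap\pi_2}(1-p_e)$, equal to $1$ if $\pi_1\cap\pi_2=\emptyset$. Its CO-weight is $W_{CO}(\pi_1,\pi_2)=\sum_{e\in\pi_1\cup\pi_2}w_e$. CO-Constrained Survivability Min-QoS (CO-CSMQ) problem: find a survivable connection minimizing $W_{CO}$ subject to survivability level $\ge S$. Restricted Shortest Path (RSP) problem: given a graph in which each link has a length $l_e$ and a time $t_e$, a bound $T$, and two nodes, find a path between them minimizing $\sum l_e$ subject to $\sum t_e\le T$. CO-TSCMQ algorithm: 1. Build a multigraph $\tilde G$ on node set $V$. For each link $e=(u,v)\in E$, add a "simple link" $u\to v$ with weight $w_e$ and survivability cost $-\ln(1-p_e)$. 2. For each ordered pair of nodes $(u,v)$ for which a pair of link-disjoint $u$–$v$ paths exists, compute a pair of link-disjoint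 $u$–$v$ paths of minimum total weight (an edge-disjoint shortest pair, EDSPoP). Add a "disjoint link" $u\to v$ with weight equal to that total weight and survivability cost $0$. 3. Solve exactly the RSP instance on $\tilde G$ from $s$ to $t$ that minimizes total weight subject to total survivability cost $\le -\ln S$. If no feasible path exists, fail. 4. Otherwise, from the returned path $\tilde\pi$ build $(\pi_1,\pi_2)$. Each simple link contributes its original link to both $\pi_1$ and $\pi_2$. Each disjoint link contributes one path of its EDSPoP to $\pi_1$ and the other to $\pi_2$. Return $(\pi_1,\pi_2)$. *)

theory Defs
  imports Complex_Main
begin

fun walk :: "('e \<Rightarrow> 'v) \<Rightarrow> ('e \<Rightarrow> 'v) \<Rightarrow> 'e set \<Rightarrow> 'v \<Rightarrow> 'e list \<Rightarrow> 'v \<Rightarrow> bool" where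
  "walk src dst E u [] v = (u = v)"
| "walk src dst E u (e # es) v = (e \<in> E \<and> src e = u \<and> walk src dst E (dst e) es v)"

definition simple_path :: "('e \<Rightarrow> 'v) \<Rightarrow> ('e \<Rightarrow> 'v) \<Rightarrow> 'e set \<Rightarrow> 'v \<Rightarrow> 'e list \<Rightarrow> 'v \<Rightarrow> bool" where
  "simple_path src dst E u es v \<longleftrightarrow> walk src dst E u es v \<and> distinct (u # map dst es)"

definition paths :: "('e \<Rightarrow> 'v) \<Rightarrow> ('e \<Rightarrow> 'v) \<Rightarrow> 'e set \<Rightarrow> 'v \<Rightarrow> 'v \<Rightarrow> 'e set set" where
  "paths src dst E s t = {set es | es. simple_path src dst E s es t}"

definition network :: "'v set \<Rightarrow> 'e set \<Rightarrow> ('e \<Rightarrow> 'v) \<Rightarrow> ('e \<Rightarrow> 'v) \<Rightarrow> ('e \<Rightarrow> real) \<Rightarrow> real \<Rightarrow> ('e \<Rightarrow> real) \<Rightarrow> bool" where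
  "network V E src dst p pmax w \<longleftrightarrow> finite V \<and> finite E \<and> (\<forall>e\<in>E. src e \<in> V \<and> dst e \<in> V)
     \<and> pmax < 1 \<and> (\<forall>e\<in>E. 0 < p e \<and> p e \<le> pmax) \<and> (\<forall>e\<in>E. 0 < w e)"

definition S_min :: "'e set \<Rightarrow> real \<Rightarrow> real" where
  "S_min E pmax = (1 - pmax) ^ card E"

definition surv_level :: "('e \<Rightarrow> real) \<Rightarrow> 'e set \<Rightarrow> 'e set \<Rightarrow> real" where
  "surv_level p \<pi>1 \<pi>2 = (\<Prod>e\<in>\<pi>1 \<inter> \<pi>2. 1 - p e)"

definition W_CO :: "('e \<Rightarrow> real) \<Rightarrow> 'e set \<Rightarrow> 'e set \<Rightarrow> real" where
  "W_CO w \<pi>1 \<pi>2 = (\<Sum>e\<in>\<pi>1 \<union> \<pi>2. w e)"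

definition feasible_conn where
  "feasible_conn src dst E p s t S \<pi>1 \<pi>2 \<longleftrightarrow>
     \<pi>1 \<in> paths src dst E s t \<and> \<pi>2 \<in> paths src dst E s t \<and> surv_level p \<pi>1 \<pi>2 \<ge> S"

definition co_csmq_optimal where
  "co_csmq_optimal src dst E p w s t S \<pi>1 \<pi>2 \<longleftrightarrow>
     feasible_conn src dst E p s t S \<pi>1 \<pi>2 \<and>
     (\<forall>\<rho>1 \<rho>2. feasible_conn src dst E p s t S \<rho>1 \<rho>2 \<longrightarrow> W_CO w \<pi>1 \<pi>2 \<le> W_CO w \<rho>1 \<rho>2)"

definition disj_pair where
  "disj_pair src dst E u v ab \<longleftrightarrow>
     simple_path src dst E u (fst ab) v \<and> simple_path src dst E u (snd ab) v \<and>
     set (fst ab) \<inter> set (snd ab) = {}"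

definition pair_weight :: "('e \<Rightarrow> real) \<Rightarrow> 'e list \<times> 'e list \<Rightarrow> real" where
  "pair_weight w ab = (\<Sum>e\<in>set (fst ab). w e) + (\<Sum>e\<in>set (snd ab). w e)"

definition edspop_choice where
  "edspop_choice V E src dst w D \<longleftrightarrow>
     (\<forall>u\<in>V. \<forall>v\<in>V. (\<exists>ab. disj_pair src dst E u v ab) \<longrightarrow>
        disj_pair src dst E u v (D u v) \<and>
        (\<forall>ab. disj_pair src dst E u v ab \<longrightarrow> pair_weight w (D u v) \<le> pair_weight w ab))"

datatype ('v, 'e) tlink = SimpleL 'e | DisjL 'v 'v

fun ttl :: "('e \<Rightarrow> 'v) \<Rightarrow> ('v, 'e) tlink \<Rightarrow> 'v" where
  "ttl src (SimpleL e) = src e"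
| "ttl src (DisjL u v) = u"

fun thd :: "('e \<Rightarrow> 'v) \<Rightarrow> ('v, 'e) tlink \<Rightarrow> 'v" where
  "thd dst (SimpleL e) = dst e"
| "thd dst (DisjL u v) = v"

definition tE :: "'v set \<Rightarrow> 'e set \<Rightarrow> ('e \<Rightarrow> 'v) \<Rightarrow> ('e \<Rightarrow> 'v) \<Rightarrow> ('v, 'e) tlink set" where
  "tE V E src dst = SimpleL ` E \<union>
     {DisjL u v | u v. u \<in> V \<and> v \<in> V \<and> (\<exists>ab. disj_pair src dst E u v ab)}"

fun tweight :: "('e \<Rightarrow> real) \<Rightarrow> ('v \<Rightarrow> 'v \<Rightarrow> 'e list \<times> 'e list) \<Rightarrow> ('v, 'e) tlink \<Rightarrow> real" where
  "tweight w D (SimpleL e) = w e"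
| "tweight w D (DisjL u v) = pair_weight w (D u v)"

fun tcost :: "('e \<Rightarrow> real) \<Rightarrow> ('v, 'e) tlink \<Rightarrow> real" where
  "tcost p (SimpleL e) = - ln (1 - p e)"
| "tcost p (DisjL u v) = 0"

definition rsp_feasible where
  "rsp_feasible V E src dst p s t S tp \<longleftrightarrow>
     simple_path (ttl src) (thd dst) (tE V E src dst) s tp t \<and> sum_list (map (tcost p) tp) \<le> - ln S"

definition rsp_optimal where
  "rsp_optimal V E src dst p w D s t S tp \<longleftrightarrow>
     rsp_feasible V E src dst p s t S tp \<and>
     (\<forall>tq. rsp_feasible V E src dst p s t S tq \<longrightarrow>
        sum_list (map (tweight w D) tp) \<le> sum_list (map (tweight w D) tq))"

fun part1 :: "('v \<Rightarrow> 'v \<Rightarrow> 'e list \<times> 'e list) \<Rightarrow> ('v, 'e) tlink \<Rightarrow> 'e set" where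
  "part1 D (SimpleL e) = {e}"
| "part1 D (DisjL u v) = set (fst (D u v))"

fun part2 :: "('v \<Rightarrow> 'v \<Rightarrow> 'e list \<times> 'e list) \<Rightarrow> ('v, 'e) tlink \<Rightarrow> 'e set" where
  "part2 D (SimpleL e) = {e}"
| "part2 D (DisjL u v) = set (snd (D u v))"

definition build where
  "build D tp = (\<Union>l\<in>set tp. part1 D l, \<Union>l\<in>set tp. part2 D l)"

text \<open>co_tscmq ... res: res is a possible outcome of the CO-TSCMQ algorithm (None = failure),
  for some valid choice of EDSPoPs and some exact RSP solution.\<close>
definition co_tscmq where
  "co_tscmq V E src dst p w s t S res \<longleftrightarrow>
     (\<exists>D. edspop_choice V E src dst w D \<and>
        (if \<exists>tp. rsp_feasible V E src dst p s t S tp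
         then (\<exists>tp. rsp_optimal V E src dst p w D s t S tp \<and> res = Some (build D tp))
         else res = None))"

end

theory Submission
  imports Defs "HOL-Library.Sublist"
begin

text \<open>
  Survivability is multiplicative, so a connection has level at least \<open>S\<close> iff the costs
  \<open>-ln (1 - p e)\<close> of its shared links sum to at most \<open>-ln S\<close>. A pair of simple \<open>s\<close>-\<open>t\<close> paths
  is translated into a path of the auxiliary multigraph by following common links as simple links
  and replacing each stretch where the paths run apart by a disjoint link, whose EDSPoP is no
  heavier; this path costs at most the shared links and weighs at most the CO-weight. Pairs whose
  shared links occur in different orders are first rerouted into a shorter pair with no new shared
  link. Conversely, a path of the multigraph is expanded link by link, and Menger's theorem for two
  edge-disjoint paths (proved by augmenting along a residual path) joins the expanded pieces into a
  connection whose shared links are simple links of the path. For an optimal RSP path, optimality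
  forces the two expanded walks to be simple paths that pay for each link exactly once, so the
  returned connection has CO-weight equal to the RSP optimum, a lower bound for the CO-weight of
  every feasible connection.
\<close>

section \<open>Walks and simple paths\<close>

lemma walk_subset_iff: "walk src dst E u xs v \<longleftrightarrow> set xs \<subseteq> E \<and> walk src dst UNIV u xs v"
  by (induction xs arbitrary: u) auto

lemma walk_mono: "walk src dst E u xs v \<Longrightarrow> E \<subseteq> E' \<Longrightarrow> walk src dst E' u xs v"
  by (induction xs arbitrary: u) auto

lemma walk_last: "walk src dst E u xs v \<Longrightarrow> v = last (u # map dst xs)"
  by (induction xs arbitrary: u) auto

lemma walk_end_in_dst: "walk src dst E u xs v \<Longrightarrow> xs \<noteq> [] \<Longrightarrow> v \<in> dst ` set xs"
proof (induction xs arbitrary: u)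
  case (Cons e xs)
  then show ?case by (cases xs) auto
qed simp

lemma walk_append:
  "walk src dst E u (xs @ ys) v \<longleftrightarrow> (\<exists>m. walk src dst E u xs m \<and> walk src dst E m ys v)"
  by (induction xs arbitrary: u) auto

lemma walk_split_at_node:
  assumes "walk src dst E u xs v" and "x \<in> set (u # map dst xs)"
  obtains xs1 xs2 where "xs = xs1 @ xs2" "walk src dst E u xs1 x" "walk src dst E x xs2 v"
  using assms
proof (induction xs arbitrary: u)
  case (Cons e xs)
  show ?case
  proof (cases "x = u")
    case True
    then show ?thesis using Cons.prems by (intro Cons.prems(1)[of "[]" "e # xs"]) auto
  next
    case False
    show ?thesis
    proof (rule Cons.IH)
      fix xs1 xs2 assume "xs = xs1 @ xs2" "walk src dst E (dst e) xs1 x" "walk src dst E x xs2 v"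
      then show thesis using Cons.prems(2) by (intro Cons.prems(1)[of "e # xs1" xs2]) auto
    qed (use Cons.prems False in auto)
  qed
qed simp

lemma walk_src_in_butlast:
  "walk src dst E u xs v \<Longrightarrow> e \<in> set xs \<Longrightarrow> src e \<in> set (butlast (u # map dst xs))"
proof (induction xs arbitrary: u)
  case (Cons f xs)
  then show ?case by (cases xs) auto
qed simp

lemma walk_nth_src:
  "walk src dst E u xs v \<Longrightarrow> k < length xs \<Longrightarrow> src (xs ! k) = (u # map dst xs) ! k"
  by (induction xs arbitrary: u k) (auto simp: nth_Cons split: nat.split)

lemma walk_exit_edge:
  "walk src dst E a xs b \<Longrightarrow> a \<in> X \<Longrightarrow> b \<notin> X \<Longrightarrow> \<exists>e\<in>set xs. src e \<in> X \<and> dst e \<notin> X"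
  by (induction xs arbitrary: a) auto

lemma walk_entry_edge:
  "walk src dst E a xs b \<Longrightarrow> a \<notin> X \<Longrightarrow> b \<in> X \<Longrightarrow> \<exists>e\<in>set xs. src e \<notin> X \<and> dst e \<in> X"
  by (induction xs arbitrary: a) auto

lemma walk_first_hit:
  assumes "walk src dst E u xs v" and "v \<in> X"
  obtains xs1 xs2 y where "xs = xs1 @ xs2" "walk src dst E u xs1 y" "walk src dst E y xs2 v" "y \<in> X"
    "set (butlast (u # map dst xs1)) \<inter> X = {}"
  using assms
proof (induction xs arbitrary: u)
  case (Cons e xs)
  show ?case
  proof (cases "u \<in> X")
    case True
    then show ?thesis using Cons.prems by (intro Cons.prems(1)[of "[]" "e # xs" u]) auto
  next
    case False
    show ?thesis
    proof (rule Cons.IH)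
      fix xs1 xs2 y assume "xs = xs1 @ xs2" "walk src dst E (dst e) xs1 y" "walk src dst E y xs2 v"
        "y \<in> X" "set (butlast (dst e # map dst xs1)) \<inter> X = {}"
      then show thesis using Cons.prems(2) False by (intro Cons.prems(1)[of "e # xs1" xs2 y]) auto
    qed (use Cons.prems in auto)
  qed
qed simp

lemma walk_decompose_cycle:
  assumes "walk src dst E u xs v" and "\<not> distinct (u # map dst xs)"
  obtains xs1 cyc xs2 z where "xs = xs1 @ cyc @ xs2" "cyc \<noteq> []"
    "walk src dst E u xs1 z" "walk src dst E z cyc z" "walk src dst E z xs2 v"
  using assms
proof (induction xs arbitrary: u)
  case (Cons e xs)
  then have e: "e \<in> E" "src e = u" and walk_xs: "walk src dst E (dst e) xs v" by auto
  show ?case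
  proof (cases "u \<in> set (dst e # map dst xs)")
    case True
    then obtain xs1 xs2 where "xs = xs1 @ xs2" "walk src dst E (dst e) xs1 u" "walk src dst E u xs2 v"
      by (rule walk_split_at_node[OF walk_xs])
    then show ?thesis using e by (intro Cons.prems(1)[of "[]" "e # xs1" xs2 u]) auto
  next
    case False
    show ?thesis
    proof (rule Cons.IH)
      fix xs1 cyc xs2 z assume "xs = xs1 @ cyc @ xs2" "cyc \<noteq> []" "walk src dst E (dst e) xs1 z"
        "walk src dst E z cyc z" "walk src dst E z xs2 v"
      then show thesis using e by (intro Cons.prems(1)[of "e # xs1" cyc xs2 z]) auto
    qed (use Cons.prems False walk_xs in auto)
  qed
qed simp

lemma simple_path_walk: "simple_path src dst E u xs v \<Longrightarrow> walk src dst E u xs v"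
  by (simp add: simple_path_def)

lemma simple_path_mono: "simple_path src dst E u xs v \<Longrightarrow> E \<subseteq> E' \<Longrightarrow> simple_path src dst E' u xs v"
  by (auto simp: simple_path_def intro: walk_mono)

lemma simple_path_distinct: "simple_path src dst E u xs v \<Longrightarrow> distinct xs"
  unfolding simple_path_def by (auto dest: distinct_map[THEN iffD1])

lemma simple_path_edges_subset: "simple_path src dst E u xs v \<Longrightarrow> set xs \<subseteq> E"
  by (auto simp: simple_path_def walk_subset_iff[of src dst E])

lemma simple_path_Nil [simp]: "simple_path src dst E u [] v \<longleftrightarrow> u = v"
  by (simp add: simple_path_def)

lemma simple_path_Cons:
  "simple_path src dst E u (e # xs) v \<longleftrightarrow>
     e \<in> E \<and> src e = u \<and> simple_path src dst E (dst e) xs v \<and> u \<notin> set (dst e # map dst xs)"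
  by (auto simp: simple_path_def)

lemma simple_path_append:
  "simple_path src dst E u (xs @ ys) v \<longleftrightarrow>
     (\<exists>m. simple_path src dst E u xs m \<and> simple_path src dst E m ys v \<and>
          set (u # map dst xs) \<inter> set (map dst ys) = {})" (is "?lhs \<longleftrightarrow> ?rhs")
proof
  assume ?lhs
  then obtain m where m: "walk src dst E u xs m" "walk src dst E m ys v"
    by (auto simp: simple_path_def walk_append)
  have "m \<in> set (u # map dst xs)"
    using walk_last[OF m(1)] by (metis last_in_set list.distinct(1))
  with \<open>?lhs\<close> m show ?rhs by (intro exI[of _ m]) (auto simp: simple_path_def)
qed (auto simp: simple_path_def walk_append)

lemma simple_path_append_walk:
  assumes "simple_path src dst E u (xs @ ys) v" and "walk src dst E u xs m"
  shows "simple_path src dst E u xs m" "simple_path src dst E m ys v"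
    "set (u # map dst xs) \<inter> set (map dst ys) = {}"
proof -
  obtain m' where m': "simple_path src dst E u xs m'" "simple_path src dst E m' ys v"
    "set (u # map dst xs) \<inter> set (map dst ys) = {}"
    using assms(1) simple_path_append by metis
  moreover have "m = m'"
    using walk_last[OF assms(2)] walk_last[OF simple_path_walk[OF m'(1)]] by simp
  ultimately show "simple_path src dst E u xs m" "simple_path src dst E m ys v"
    "set (u # map dst xs) \<inter> set (map dst ys) = {}" by simp_all
qed

lemma simple_path_closed: "simple_path src dst E u xs u \<Longrightarrow> xs = []"
  by (cases xs rule: rev_cases) (auto simp: simple_path_def dest: walk_last)

lemma simple_path_split_at_node:
  assumes "simple_path src dst E u xs v" and "x \<in> set (u # map dst xs)"
  obtains xs1 xs2 where "xs = xs1 @ xs2" "simple_path src dst E u xs1 x" "simple_path src dst E x xs2 v"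
    "set (u # map dst xs1) \<inter> set (map dst xs2) = {}"
proof -
  obtain xs1 xs2 where split: "xs = xs1 @ xs2" and walk1: "walk src dst E u xs1 x"
    using walk_split_at_node[OF simple_path_walk[OF assms(1)] assms(2)] by blast
  then obtain m where "simple_path src dst E u xs1 m" "simple_path src dst E m xs2 v"
    "set (u # map dst xs1) \<inter> set (map dst xs2) = {}"
    using assms(1) simple_path_append by metis
  moreover have "m = x"
    using walk_last[OF walk1] walk_last[OF simple_path_walk[OF calculation(1)]] by simp
  ultimately show thesis using that split by blast
qed

lemma simple_path_edge_from_start:
  assumes "simple_path src dst E u xs v" and "e \<in> set xs" and "src e = u"
  shows "e = hd xs"
proof (cases xs)
  case (Cons f xs')
  show ?thesis
  proof (rule ccontr)
    assume "e \<noteq> hd xs"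
    then have "e \<in> set xs'" using assms(2) Cons by auto
    moreover have "walk src dst E (dst f) xs' v" using assms(1) Cons by (simp add: simple_path_def)
    ultimately have "src e \<in> set (dst f # map dst xs')"
      by (meson in_set_butlastD walk_src_in_butlast)
    then show False using assms Cons by (auto simp: simple_path_def)
  qed
qed (use assms in simp)

lemma walk_shortcut:
  "walk src dst E u xs v \<Longrightarrow> \<exists>ys. simple_path src dst E u ys v \<and> subseq ys xs"
proof (induction xs arbitrary: u)
  case Nil
  then show ?case by (intro exI[of _ "[]"]) simp
next
  case (Cons e xs)
  then obtain ys where ys: "simple_path src dst E (dst e) ys v" "subseq ys xs" by auto
  show ?case
  proof (cases "u \<in> set (dst e # map dst ys)")
    case True
    from simple_path_split_at_node[OF ys(1) True] obtain ys1 ys2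
      where "ys = ys1 @ ys2" "simple_path src dst E u ys2 v" by metis
    then show ?thesis using ys(2) by (intro exI[of _ ys2]) (auto dest: list_emb_appendD)
  next
    case False
    then show ?thesis using Cons.prems ys by (intro exI[of _ "e # ys"]) (auto simp: simple_path_Cons)
  qed
qed

lemma subseq_set_subset: "subseq xs ys \<Longrightarrow> set xs \<subseteq> set ys"
  by (induction rule: list_emb.induct) auto

lemma subseq_sum_list_le:
  fixes f :: "'a \<Rightarrow> 'b :: ordered_comm_monoid_add"
  shows "subseq xs ys \<Longrightarrow> (\<And>y. y \<in> set ys \<Longrightarrow> 0 \<le> f y) \<Longrightarrow> sum_list (map f xs) \<le> sum_list (map f ys)"
proof (induction rule: list_emb.induct)
  case (list_emb_Nil ys)
  then show ?case by (auto intro!: sum_list_nonneg)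
qed (auto intro: add_increasing add_mono)

section \<open>Two edge-disjoint paths\<close>

definition excess :: "('e \<Rightarrow> 'v) \<Rightarrow> ('e \<Rightarrow> 'v) \<Rightarrow> 'e set \<Rightarrow> 'v \<Rightarrow> int" where
  "excess src dst F x = (\<Sum>e\<in>F. of_bool (src e = x) - of_bool (dst e = x))"

lemma excess_insert:
  "finite F \<Longrightarrow> e \<notin> F \<Longrightarrow>
     excess src dst (insert e F) x = excess src dst F x + of_bool (src e = x) - of_bool (dst e = x)"
  by (simp add: excess_def)

lemma excess_union:
  "finite F \<Longrightarrow> finite G \<Longrightarrow> F \<inter> G = {} \<Longrightarrow>
     excess src dst (F \<union> G) x = excess src dst F x + excess src dst G x"
  by (simp add: excess_def sum.union_disjoint)

lemma excess_diff:
  "finite F \<Longrightarrow> G \<subseteq> F \<Longrightarrow> excess src dst (F - G) x = excess src dst F x - excess src dst G x"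
  by (simp add: excess_def sum_diff)

lemma excess_trail:
  "walk src dst E a xs b \<Longrightarrow> distinct xs \<Longrightarrow>
     excess src dst (set xs) x = of_bool (x = a) - of_bool (x = b)"
  by (induction xs arbitrary: a) (auto simp: excess_def)

lemma excess_pos_out_edge:
  assumes "excess src dst F x > 0"
  shows "\<exists>e\<in>F. src e = x"
proof (rule ccontr)
  assume "\<not> (\<exists>e\<in>F. src e = x)"
  then have "excess src dst F x \<le> 0" unfolding excess_def by (intro sum_nonpos) auto
  with assms show False by simp
qed

lemma trail_to_negative_excess:
  assumes "finite F" and "excess src dst F x > 0"
  shows "\<exists>xs y. walk src dst F x xs y \<and> distinct xs \<and> excess src dst F y < 0"
  using assms
proof (induction "card F" arbitrary: F x rule: less_induct)
  case less
  obtain e where e: "e \<in> F" "src e = x" using excess_pos_out_edge[OF less.prems(2)] by blast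
  define F' where "F' = F - {e}"
  have fin': "finite F'" and e': "e \<notin> F'" using less.prems by (auto simp: F'_def)
  have card': "card F' < card F" using card_Diff1_less[OF less.prems(1) e(1)] by (simp add: F'_def)
  have exc: "excess src dst F z = excess src dst F' z + of_bool (x = z) - of_bool (dst e = z)" for z
    using excess_insert[OF fin' e', of src dst z] e by (simp add: F'_def insert_absorb)
  have walk_F: "walk src dst F' a xs b \<Longrightarrow> walk src dst F a xs b" for a xs b
    by (erule walk_mono) (auto simp: F'_def)
  have distinct_e: "walk src dst F' a xs b \<Longrightarrow> distinct xs \<Longrightarrow> distinct (e # xs)" for a xs b
    using e' by (auto simp: walk_subset_iff[of src dst F'])
  show ?case
  proof (cases "dst e = x \<or> excess src dst F (dst e) < 0")
    case True
    then show ?thesis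
    proof
      assume "dst e = x"
      then have "excess src dst F' x > 0" using less.prems(2) exc[of x] by simp
      then obtain xs y where "walk src dst F' x xs y" "distinct xs" "excess src dst F' y < 0"
        using less.hyps[OF card' fin'] by blast
      then show ?thesis
        using exc[of y] \<open>dst e = x\<close> by (intro exI[of _ xs] exI[of _ y]) (auto intro: walk_F)
    next
      assume "excess src dst F (dst e) < 0"
      then show ?thesis using e by (intro exI[of _ "[e]"]) auto
    qed
  next
    case False
    then have "excess src dst F' (dst e) > 0" using exc[of "dst e"] by (auto simp: eq_commute)
    then obtain xs y where xs: "walk src dst F' (dst e) xs y" "distinct xs" "excess src dst F' y < 0"
      using less.hyps[OF card' fin'] by blast
    have "y \<noteq> dst e" "y \<noteq> x" using xs(3) False less.prems exc[of "dst e"] exc[of x] by auto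
    then have "excess src dst F y < 0" using exc[of y] xs(3) by simp
    then show ?thesis
      using e xs distinct_e[OF xs(1,2)] by (intro exI[of _ "e # xs"] exI[of _ y]) (auto intro: walk_F)
  qed
qed

lemma two_disjoint_paths_of_excess:
  assumes "finite F" and "u \<noteq> w"
    and exc: "\<And>x. excess src dst F x = 2 * (of_bool (x = u) - of_bool (x = w))"
  shows "\<exists>P Q. simple_path src dst F u P w \<and> simple_path src dst F u Q w \<and> set P \<inter> set Q = {}"
proof -
  have pos: "excess src dst F u > 0" using exc[of u] assms(2) by simp
  obtain T1 y where T1: "walk src dst F u T1 y" "distinct T1" "excess src dst F y < 0"
    using trail_to_negative_excess[OF assms(1) pos] by blast
  have "y = w" using T1(3) exc[of y] by (cases "y = u"; cases "y = w") auto
  define F1 where "F1 = F - set T1"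
  have T1F: "set T1 \<subseteq> F" using T1(1) walk_subset_iff by metis
  have exc1: "excess src dst F1 x = of_bool (x = u) - of_bool (x = w)" for x
    by (simp add: F1_def excess_diff[OF assms(1) T1F] exc excess_trail[OF T1(1,2)] \<open>y = w\<close>)
  have fin1: "finite F1" and pos1: "excess src dst F1 u > 0"
    using assms(1,2) exc1[of u] by (simp_all add: F1_def)
  obtain T2 y2 where T2: "walk src dst F1 u T2 y2" "excess src dst F1 y2 < 0"
    using trail_to_negative_excess[OF fin1 pos1] by blast
  have "y2 = w" using T2(2) exc1[of y2] by (cases "y2 = u"; cases "y2 = w") auto
  obtain P where P: "simple_path src dst F u P w" "subseq P T1"
    using walk_shortcut[OF T1(1)] \<open>y = w\<close> by blast
  have "walk src dst F u T2 w" using walk_mono[OF T2(1)] \<open>y2 = w\<close> by (auto simp: F1_def)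
  then obtain Q where Q: "simple_path src dst F u Q w" "subseq Q T2"
    using walk_shortcut by metis
  have "set T2 \<subseteq> F1" using T2(1) walk_subset_iff by metis
  then have "set P \<inter> set Q = {}"
    using subseq_set_subset[OF P(2)] subseq_set_subset[OF Q(2)] by (auto simp: F1_def)
  then show ?thesis using P Q by blast
qed

lemma walk_unique_exit:
  assumes "walk src dst E a xs b" and no_entry: "\<forall>e\<in>set xs. dst e \<in> X \<longrightarrow> src e \<in> X"
    and "g1 \<in> set xs" "src g1 \<in> X" "dst g1 \<notin> X"
    and "g2 \<in> set xs" "src g2 \<in> X" "dst g2 \<notin> X"
  shows "g1 = g2"
proof -
  have no_return: False if split: "xs = ys1 @ h1 # ys2 @ h2 # ys3" and "dst h1 \<notin> X" "src h2 \<in> X"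
    for ys1 h1 ys2 h2 ys3
  proof -
    have "walk src dst E (dst h1) ys2 (src h2)"
      using assms(1) split by (auto simp: walk_append)
    with \<open>dst h1 \<notin> X\<close> \<open>src h2 \<in> X\<close> obtain e where "e \<in> set ys2" "src e \<notin> X" "dst e \<in> X"
      using walk_entry_edge by metis
    then show False using no_entry split by auto
  qed
  show ?thesis
  proof (rule ccontr)
    assume "g1 \<noteq> g2"
    obtain ys zs where xs: "xs = ys @ g1 # zs" using split_list assms(3) by metis
    with \<open>g1 \<noteq> g2\<close> assms(6) have "g2 \<in> set ys \<or> g2 \<in> set zs" by auto
    then show False
    proof
      assume "g2 \<in> set ys"
      then obtain ys1 ys2 where "ys = ys1 @ g2 # ys2" using split_list by metis
      then show False using no_return[of ys1 g2 ys2 g1 zs] xs assms by auto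
    next
      assume "g2 \<in> set zs"
      then obtain zs1 zs2 where "zs = zs1 @ g2 # zs2" using split_list by metis
      then show False using no_return[of ys g1 zs1 g2 zs2] xs assms by auto
    qed
  qed
qed

fun res_src :: "('e \<Rightarrow> 'v) \<Rightarrow> ('e \<Rightarrow> 'v) \<Rightarrow> 'e \<times> bool \<Rightarrow> 'v" where
  "res_src src dst (e, fwd) = (if fwd then src e else dst e)"

fun res_dst :: "('e \<Rightarrow> 'v) \<Rightarrow> ('e \<Rightarrow> 'v) \<Rightarrow> 'e \<times> bool \<Rightarrow> 'v" where
  "res_dst src dst (e, fwd) = (if fwd then dst e else src e)"

definition residual :: "'e set \<Rightarrow> 'e list \<Rightarrow> ('e \<times> bool) set" where
  "residual H P0 = (\<lambda>e. (e, True)) ` (H - set P0) \<union> (\<lambda>e. (e, False)) ` set P0"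

lemma excess_residual:
  assumes "finite R"
  shows "excess (res_src src dst) (res_dst src dst) R x =
           excess src dst {e. (e, True) \<in> R} x - excess src dst {e. (e, False) \<in> R} x"
proof -
  let ?Fw = "{e. (e, True) \<in> R}" and ?Bk = "{e. (e, False) \<in> R}"
  have R: "R = (\<lambda>e. (e, True)) ` ?Fw \<union> (\<lambda>e. (e, False)) ` ?Bk"
  proof (rule set_eqI)
    fix r :: "'a \<times> bool"
    show "r \<in> R \<longleftrightarrow> r \<in> (\<lambda>e. (e, True)) ` ?Fw \<union> (\<lambda>e. (e, False)) ` ?Bk"
      by (cases r; cases "snd r") auto
  qed
  have "finite ?Fw" "finite ?Bk"
    using finite_vimageI[OF assms, of "\<lambda>e. (e, True)"] finite_vimageI[OF assms, of "\<lambda>e. (e, False)"]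
    by (auto simp: vimage_def inj_on_def)
  then have "excess (res_src src dst) (res_dst src dst) R x =
      (\<Sum>e\<in>?Fw. of_bool (src e = x) - of_bool (dst e = x)) +
      (\<Sum>e\<in>?Bk. of_bool (dst e = x) - of_bool (src e = x))"
    unfolding excess_def
    by (subst R, subst sum.union_disjoint) (auto simp: sum.reindex inj_on_def simp del: sum_of_bool_eq)
  then show ?thesis by (simp add: excess_def sum_subtractf del: sum_of_bool_eq)
qed

lemma augmenting_walk_disjoint_paths:
  assumes "finite H" and "u \<noteq> w" and P0: "simple_path src dst H u P0 w"
    and "walk (res_src src dst) (res_dst src dst) (residual H P0) u \<rho>0 w"
  shows "\<exists>P Q. simple_path src dst H u P w \<and> simple_path src dst H u Q w \<and> set P \<inter> set Q = {}"
proof -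
  obtain \<rho> where \<rho>: "simple_path (res_src src dst) (res_dst src dst) (residual H P0) u \<rho> w"
    using walk_shortcut[OF assms(4)] by blast
  define Fw where "Fw = {e. (e, True) \<in> set \<rho>}"
  define Bk where "Bk = {e. (e, False) \<in> set \<rho>}"
  have "set \<rho> \<subseteq> residual H P0" using simple_path_edges_subset[OF \<rho>] .
  then have Fw: "Fw \<subseteq> H - set P0" and Bk: "Bk \<subseteq> set P0"
    by (auto simp: Fw_def Bk_def residual_def)
  txt \<open>\<open>P0\<close> augmented along \<open>\<rho>\<close>: its excess is \<open>2\<close> at \<open>u\<close> and \<open>-2\<close> at \<open>w\<close>.\<close>
  define F where "F = (set P0 - Bk) \<union> Fw"
  have fin: "finite Fw" "finite F" using Fw assms(1) by (auto simp: F_def finite_subset)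
  have "excess src dst F x = excess src dst (set P0 - Bk) x + excess src dst Fw x" for x
    unfolding F_def using Fw fin by (intro excess_union) auto
  also have "\<dots> x = excess src dst (set P0) x + excess (res_src src dst) (res_dst src dst) (set \<rho>) x" for x
    using excess_diff[OF finite_set Bk, of src dst x] excess_residual[OF finite_set, of src dst \<rho> x]
    by (simp add: Fw_def Bk_def)
  also have "\<dots> x = 2 * (of_bool (x = u) - of_bool (x = w))" for x
    using excess_trail[OF simple_path_walk simple_path_distinct, OF P0 P0]
      excess_trail[OF simple_path_walk simple_path_distinct, OF \<rho> \<rho>] by simp
  finally obtain P Q where "simple_path src dst F u P w" "simple_path src dst F u Q w" "set P \<inter> set Q = {}"
    using two_disjoint_paths_of_excess[OF fin(2) assms(2)] by blast
  moreover have "F \<subseteq> H" using Fw simple_path_edges_subset[OF P0] by (auto simp: F_def)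
  ultimately show ?thesis by (blast intro: simple_path_mono)
qed

text \<open>If \<open>w\<close> is not reachable in the residual graph, every edge of \<open>H\<close> leaving the reachable
  set lies on \<open>P0\<close>, and \<open>P0\<close>, never re-entering it, leaves it only once.\<close>

lemma residual_cut:
  assumes P0: "simple_path src dst H u P0 w"
    and X: "X = {x. \<exists>\<rho>. walk (res_src src dst) (res_dst src dst) (residual H P0) u \<rho> x}"
    and W1: "walk src dst H a W1 b" and W2: "walk src dst H a W2 b" and "set W1 \<inter> set W2 = {}"
    and "a \<in> X" "b \<notin> X"
  shows False
proof -
  have extend: "y \<in> X" if "x \<in> X" "r \<in> residual H P0" "res_src src dst r = x" "res_dst src dst r = y"
    for x y r
  proof -
    from \<open>x \<in> X\<close> obtain \<rho> where "walk (res_src src dst) (res_dst src dst) (residual H P0) u \<rho> x"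
      unfolding X by blast
    with that have "walk (res_src src dst) (res_dst src dst) (residual H P0) u (\<rho> @ [r]) y"
      by (simp add: walk_append)
    then show "y \<in> X" unfolding X by blast
  qed
  have exit_on_P0: "e \<in> set P0" if "e \<in> H" "src e \<in> X" "dst e \<notin> X" for e
    using extend[of "src e" "(e, True)" "dst e"] that by (auto simp: residual_def)
  have no_entry: "\<forall>e\<in>set P0. dst e \<in> X \<longrightarrow> src e \<in> X"
  proof (intro ballI impI)
    fix e assume "e \<in> set P0" "dst e \<in> X"
    then show "src e \<in> X" using extend[of "dst e" "(e, False)" "src e"] by (auto simp: residual_def)
  qed
  obtain g1 where g1: "g1 \<in> set W1" "src g1 \<in> X" "dst g1 \<notin> X"
    using walk_exit_edge[OF W1 assms(6,7)] by blast
  obtain g2 where g2: "g2 \<in> set W2" "src g2 \<in> X" "dst g2 \<notin> X"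
    using walk_exit_edge[OF W2 assms(6,7)] by blast
  have "g1 \<in> set P0" "g2 \<in> set P0"
    using exit_on_P0 g1 g2 W1 W2 by (auto simp: walk_subset_iff[of src dst H])
  then have "g1 = g2" using walk_unique_exit[OF simple_path_walk[OF P0] no_entry] g1 g2 by blast
  with g1(1) g2(1) assms(5) show False by blast
qed

lemma two_disjoint_paths_concat:
  assumes "finite H"
    and A: "walk src dst H u A v" and B: "walk src dst H u B v" and AB: "set A \<inter> set B = {}"
    and C: "walk src dst H v C w" and D: "walk src dst H v D w" and CD: "set C \<inter> set D = {}"
  shows "\<exists>P Q. simple_path src dst H u P w \<and> simple_path src dst H u Q w \<and> set P \<inter> set Q = {}"
proof (cases "u = w")
  case True
  then show ?thesis by (intro exI[of _ "[]"]) auto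
next
  case False
  have "walk src dst H u (A @ C) w" using A C by (auto simp: walk_append)
  then obtain P0 where P0: "simple_path src dst H u P0 w" using walk_shortcut by metis
  define X where "X = {x. \<exists>\<rho>. walk (res_src src dst) (res_dst src dst) (residual H P0) u \<rho> x}"
  show ?thesis
  proof (cases "w \<in> X")
    case True
    then obtain \<rho> where "walk (res_src src dst) (res_dst src dst) (residual H P0) u \<rho> w"
      unfolding X_def by blast
    from augmenting_walk_disjoint_paths[OF assms(1) False P0 this] show ?thesis .
  next
    case w: False
    have "u \<in> X" unfolding X_def by (auto intro: exI[of _ "[]"])
    show ?thesis
    proof (cases "v \<in> X")
      case True
      from residual_cut[OF P0 X_def C D CD True w] show ?thesis ..
    next
      case False
      from residual_cut[OF P0 X_def A B AB \<open>u \<in> X\<close> False] show ?thesis ..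
    qed
  qed
qed

lemma walk_map_fst:
  "walk (src \<circ> fst) (dst \<circ> fst) R u rs v \<Longrightarrow> walk src dst (fst ` R) u (map fst rs) v"
  by (induction rs arbitrary: u) auto

lemma walk_map_tag:
  "walk src dst E u xs v \<Longrightarrow> (\<And>x. x \<in> set xs \<Longrightarrow> fst (f x) = x) \<Longrightarrow> f ` set xs \<subseteq> R \<Longrightarrow>
     walk (src \<circ> fst) (dst \<circ> fst) R u (map f xs) v"
  by (induction xs arbitrary: u) auto

lemma simple_path_map_fst:
  "simple_path (src \<circ> fst) (dst \<circ> fst) R u rs v \<Longrightarrow> simple_path src dst (fst ` R) u (map fst rs) v"
  by (auto simp: simple_path_def walk_map_fst)

text \<open>The edges of \<open>D\<close> lying on \<open>C\<close> are doubled, so that the two pairs become edge-disjoint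
  in a multigraph; two paths that use both copies of an edge can only share edges of \<open>C \<inter> D\<close>.\<close>

lemma two_paths_concat:
  assumes A: "walk src dst E u A v" and B: "walk src dst E u B v" and "set A \<inter> set B = {}"
    and C: "walk src dst E v C w" and D: "walk src dst E v D w"
  shows "\<exists>P Q. simple_path src dst E u P w \<and> simple_path src dst E u Q w \<and>
    set P \<inter> set Q \<subseteq> set C \<inter> set D \<and> set P \<union> set Q \<subseteq> set A \<union> set B \<union> set C \<union> set D"
proof -
  let ?tag = "\<lambda>e. (e, False)" and ?tagD = "\<lambda>e. (e, e \<in> set C)"
  define R where "R = ?tag ` (set A \<union> set B \<union> set C) \<union> ?tagD ` set D"
  have fin: "finite R" by (simp add: R_def)
  have walks: "walk (src \<circ> fst) (dst \<circ> fst) R u (map ?tag A) v"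
    "walk (src \<circ> fst) (dst \<circ> fst) R u (map ?tag B) v"
    "walk (src \<circ> fst) (dst \<circ> fst) R v (map ?tag C) w"
    "walk (src \<circ> fst) (dst \<circ> fst) R v (map ?tagD D) w"
    by (rule walk_map_tag; use A B C D in \<open>auto simp: R_def\<close>)+
  have disj: "set (map ?tag A) \<inter> set (map ?tag B) = {}" "set (map ?tag C) \<inter> set (map ?tagD D) = {}"
    using assms(3) by auto
  obtain P' Q' where PQ': "simple_path (src \<circ> fst) (dst \<circ> fst) R u P' w"
      "simple_path (src \<circ> fst) (dst \<circ> fst) R u Q' w" "set P' \<inter> set Q' = {}"
    using two_disjoint_paths_concat[OF fin walks(1,2) disj(1) walks(3,4) disj(2)] by blast
  have RE: "fst ` R = set A \<union> set B \<union> set C \<union> set D" by (simp add: R_def image_Un image_image)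
  have "fst ` R \<subseteq> E"
    unfolding RE using A B C D by (auto dest!: walk_subset_iff[THEN iffD1, THEN conjunct1])
  then have simple: "simple_path src dst E u (map fst P') w" "simple_path src dst E u (map fst Q') w"
    using simple_path_mono[OF simple_path_map_fst[OF PQ'(1)]] simple_path_mono[OF simple_path_map_fst[OF PQ'(2)]]
    by simp_all
  have "set P' \<union> set Q' \<subseteq> R"
    using simple_path_edges_subset[OF PQ'(1)] simple_path_edges_subset[OF PQ'(2)] by simp
  then have sub: "set (map fst P') \<union> set (map fst Q') \<subseteq> set A \<union> set B \<union> set C \<union> set D"
    using RE by auto
  have "set (map fst P') \<inter> set (map fst Q') \<subseteq> set C \<inter> set D"
  proof
    fix e assume "e \<in> set (map fst P') \<inter> set (map fst Q')"
    then obtain b1 b2 where "(e, b1) \<in> set P'" "(e, b2) \<in> set Q'" by auto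
    with PQ'(3) \<open>set P' \<union> set Q' \<subseteq> R\<close> have "(e, True) \<in> R" by (cases b1; cases b2) auto
    then show "e \<in> set C \<inter> set D" by (auto simp: R_def)
  qed
  with simple sub show ?thesis by blast
qed

section \<open>Pairs of simple paths with common ends\<close>

lemma simple_paths_edge_disjoint:
  assumes sP: "simple_path src dst E u P y" and sQ: "simple_path src dst E u Q v"
    and avoid: "set (butlast (u # map dst P)) \<inter> set (map dst Q) = {}" and "hd P \<noteq> hd Q"
  shows "set P \<inter> set Q = {}"
proof (rule ccontr)
  assume "set P \<inter> set Q \<noteq> {}"
  then obtain g where g: "g \<in> set P" "g \<in> set Q" by blast
  have "src g \<in> set (butlast (u # map dst P))" by (rule walk_src_in_butlast[OF simple_path_walk[OF sP] g(1)])
  moreover have "src g \<in> set (u # map dst Q)"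
    using walk_src_in_butlast[OF simple_path_walk[OF sQ] g(2)] by (meson in_set_butlastD)
  ultimately have "src g = u" using avoid by auto
  then have "g = hd P" "g = hd Q"
    using simple_path_edge_from_start[OF sP g(1)] simple_path_edge_from_start[OF sQ g(2)] by simp_all
  with assms(4) show False by simp
qed

lemma simple_path_pair_first_meeting:
  assumes sP: "simple_path src dst E u P v" and sQ: "simple_path src dst E u Q v"
    and "P \<noteq> []" "Q \<noteq> []" "hd P \<noteq> hd Q"
  obtains y P1 P2 Q1 Q2 where "P = P1 @ P2" "Q = Q1 @ Q2" "P1 \<noteq> []"
    "simple_path src dst E u P1 y" "simple_path src dst E y P2 v"
    "simple_path src dst E u Q1 y" "simple_path src dst E y Q2 v"
    "set P1 \<inter> set Q = {}" "simple_path src dst E u (P1 @ Q2) v"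
proof -
  let ?S = "set (map dst Q)"
  have "v \<in> ?S" using walk_end_in_dst[OF simple_path_walk[OF sQ] \<open>Q \<noteq> []\<close>] by simp
  then obtain P1 P2 y where P: "P = P1 @ P2" "walk src dst E u P1 y" "y \<in> ?S"
      and before_y: "set (butlast (u # map dst P1)) \<inter> ?S = {}"
    using walk_first_hit[OF simple_path_walk[OF sP]] by metis
  have P12: "simple_path src dst E u P1 y" "simple_path src dst E y P2 v"
    using simple_path_append_walk[OF sP[unfolded P(1)] P(2)] by simp_all
  have "u \<notin> ?S" using sQ by (simp add: simple_path_def)
  then have "P1 \<noteq> []" using P(2,3) by auto
  obtain Q1 Q2 where Q: "Q = Q1 @ Q2" "simple_path src dst E u Q1 y" "simple_path src dst E y Q2 v"
      "set (u # map dst Q1) \<inter> set (map dst Q2) = {}"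
    using simple_path_split_at_node[OF sQ] P(3) by (metis list.set_intros(2))
  have "hd P1 \<noteq> hd Q" using assms(5) P(1) \<open>P1 \<noteq> []\<close> by simp
  with P12(1) sQ before_y have "set P1 \<inter> set Q = {}" by (rule simple_paths_edge_disjoint)
  moreover have "simple_path src dst E u (P1 @ Q2) v"
  proof -
    have "set (u # map dst P1) = insert y (set (butlast (u # map dst P1)))"
      using walk_last[OF P(2)] by (metis append_butlast_last_id list.distinct(1) list.simps(15)
          rotate1.simps(2) set_rotate1)
    moreover have "y \<notin> set (map dst Q2)" using Q(4) walk_last[OF simple_path_walk[OF Q(2)]]
      by (metis disjoint_iff last_in_set list.distinct(1))
    ultimately have "set (u # map dst P1) \<inter> set (map dst Q2) = {}"
      using before_y Q(1) by auto
    then show ?thesis using simple_path_append P12(1) Q(3) by metis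
  qed
  ultimately show thesis using that P(1) Q(1-3) P12 \<open>P1 \<noteq> []\<close> by blast
qed

lemma simple_path_pair_reroute:
  assumes P: "P = P1 @ P2" and Q: "Q = Q1 @ Q2"
    and sP: "simple_path src dst E u P v" and sQ: "simple_path src dst E u Q v"
    and "set P1 \<inter> set Q = {}" and P1Q2: "simple_path src dst E u (P1 @ Q2) v"
    and "g \<in> set Q1" "g \<in> set P2"
  obtains P' Q' where "simple_path src dst E u P' v" "simple_path src dst E u Q' v"
    "length P' + length Q' < length P + length Q"
    "set P' \<union> set Q' \<subseteq> set P \<union> set Q" "set P' \<inter> set Q' \<subseteq> set P \<inter> set Q"
proof -
  obtain Pa Pb where Pab: "P2 = Pa @ g # Pb" using split_list[OF assms(8)] by blast
  obtain Qa Qb where Qab: "Q1 = Qa @ g # Qb" using split_list[OF assms(7)] by blast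
  have "walk src dst E (dst g) Pb v"
    using simple_path_walk[OF sP] by (auto simp: P Pab walk_append)
  moreover have "walk src dst E u Qa (src g)" "g \<in> E"
    using simple_path_walk[OF sQ] by (auto simp: Q Qab walk_append)
  ultimately have "walk src dst E u (Qa @ g # Pb) v" by (auto simp: walk_append)
  then obtain Q' where Q': "simple_path src dst E u Q' v" "subseq Q' (Qa @ g # Pb)"
    using walk_shortcut by metis
  have distinct: "distinct P" "distinct Q"
    using simple_path_distinct[OF sP] simple_path_distinct[OF sQ] .
  have "set Q' \<subseteq> set Qa \<union> {g} \<union> set Pb" using subseq_set_subset[OF Q'(2)] by auto
  with assms(5) distinct have "set (P1 @ Q2) \<inter> set Q' \<subseteq> set P \<inter> set Q"
    by (auto simp: P Q Pab Qab)
  moreover have "set (P1 @ Q2) \<union> set Q' \<subseteq> set P \<union> set Q"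
    using \<open>set Q' \<subseteq> set Qa \<union> {g} \<union> set Pb\<close> by (auto simp: P Q Pab Qab)
  moreover have "length (P1 @ Q2) + length Q' < length P + length Q"
    using list_emb_length[OF Q'(2)] by (simp add: P Q Pab Qab)
  ultimately show thesis using that P1Q2 Q'(1) by blast
qed

lemma simple_path_pair_cases:
  assumes sP: "simple_path src dst E u P v" and sQ: "simple_path src dst E u Q v"
  obtains (empty) "P = []" "Q = []"
  | (common) e P' Q' where "P = e # P'" "Q = e # Q'"
  | (meet) y P1 P2 Q1 Q2 where "P = P1 @ P2" "Q = Q1 @ Q2" "P1 \<noteq> []"
      "simple_path src dst E u P1 y" "simple_path src dst E u Q1 y"
      "simple_path src dst E y P2 v" "simple_path src dst E y Q2 v"
      "set P1 \<inter> (set Q1 \<union> set P2 \<union> set Q2) = {}" "set Q1 \<inter> (set P2 \<union> set Q2) = {}"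
  | (shorter) P' Q' where "simple_path src dst E u P' v" "simple_path src dst E u Q' v"
      "length P' + length Q' < length P + length Q"
      "set P' \<union> set Q' \<subseteq> set P \<union> set Q" "set P' \<inter> set Q' \<subseteq> set P \<inter> set Q"
proof (cases "P = [] \<or> Q = []")
  case True
  then have "u = v" using sP sQ by auto
  then show thesis using empty sP sQ simple_path_closed by metis
next
  case False
  then obtain e P' f Q' where PQ: "P = e # P'" "Q = f # Q'" by (meson list.exhaust)
  show thesis
  proof (cases "e = f")
    case True
    then show thesis using common PQ by blast
  next
    case False
    then obtain y P1 P2 Q1 Q2 where split: "P = P1 @ P2" "Q = Q1 @ Q2" "P1 \<noteq> []"
        "simple_path src dst E u P1 y" "simple_path src dst E y P2 v"
        "simple_path src dst E u Q1 y" "simple_path src dst E y Q2 v"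
        and P1Q: "set P1 \<inter> set Q = {}" and P1Q2: "simple_path src dst E u (P1 @ Q2) v"
      using simple_path_pair_first_meeting[OF sP sQ] PQ by (metis list.distinct(1) list.sel(1))
    show thesis
    proof (cases "set Q1 \<inter> set P2 = {}")
      case True
      moreover have "distinct P" "distinct Q"
        using simple_path_distinct[OF sP] simple_path_distinct[OF sQ] .
      ultimately show thesis using meet[OF split(1-4,6,5,7)] P1Q split(1,2) by auto
    next
      case False
      then obtain g where "g \<in> set Q1" "g \<in> set P2" by blast
      from simple_path_pair_reroute[OF split(1,2) sP sQ P1Q P1Q2 this] shorter show thesis by blast
    qed
  qed
qed

lemma le_prod_iff_sum_neg_ln_le:
  fixes q :: "'a \<Rightarrow> real"
  assumes "finite A" and "\<And>e. e \<in> A \<Longrightarrow> 0 < q e" and "0 < S"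
  shows "S \<le> (\<Prod>e\<in>A. q e) \<longleftrightarrow> (\<Sum>e\<in>A. - ln (q e)) \<le> - ln S"
proof -
  have "0 < (\<Prod>e\<in>A. q e)" using assms(2) by (rule prod_pos)
  moreover have "ln (\<Prod>e\<in>A. q e) = - (\<Sum>e\<in>A. - ln (q e))"
    using ln_prod[OF assms(1), of q] assms(2) by (simp add: sum_negf less_imp_neq[symmetric])
  moreover have "S \<le> (\<Prod>e\<in>A. q e) \<longleftrightarrow> ln S \<le> ln (\<Prod>e\<in>A. q e)"
    using calculation(1) assms(3) by simp
  ultimately show ?thesis by linarith
qed

lemma sum_list_map_eq_sum_count_real:
  "set xs \<subseteq> X \<Longrightarrow> finite X \<Longrightarrow> sum_list (map f xs) = (\<Sum>x\<in>X. real (count_list xs x) * (f x :: real))"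
proof (induction xs)
  case (Cons a xs)
  have "(\<Sum>x\<in>X. real (count_list (a # xs) x) * f x) = (\<Sum>x\<in>X. real (count_list xs x) * f x + of_bool (a = x) * f x)"
    by (intro sum.cong) (auto simp: algebra_simps)
  also have "\<dots> = (\<Sum>x\<in>X. real (count_list xs x) * f x) + f a"
    using Cons.prems by (simp add: sum.distrib)
  finally show ?case using Cons by simp
qed simp

lemma sum_set_le_sum_list:
  fixes f :: "'a \<Rightarrow> 'b :: ordered_comm_monoid_add"
  shows "(\<And>x. x \<in> set xs \<Longrightarrow> 0 \<le> f x) \<Longrightarrow> sum f (set xs) \<le> sum_list (map f xs)"
proof (induction xs)
  case (Cons a xs)
  then show ?case
    by (cases "a \<in> set xs") (auto simp: insert_absorb intro: add_increasing add_left_mono)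
qed simp

lemma distinct_if_count_list_le_1: "(\<And>x. count_list xs x \<le> 1) \<Longrightarrow> distinct xs"
proof (induction xs)
  case (Cons a xs)
  have "count_list xs x \<le> count_list (a # xs) x" for x by simp
  then have "count_list xs a = 0" "\<And>x. count_list xs x \<le> 1"
    using Cons.prems[of a] le_trans[OF _ Cons.prems] by auto
  then show ?case using Cons.IH by (simp add: count_list_0_iff)
qed simp

lemma weighted_sum_le_sum_imp_eq_1:
  fixes n w :: "'a \<Rightarrow> real"
  assumes "finite U" and "\<And>e. e \<in> U \<Longrightarrow> 0 < w e" and "\<And>e. e \<in> U \<Longrightarrow> 1 \<le> n e"
    and "(\<Sum>e\<in>U. n e * w e) \<le> (\<Sum>e\<in>U. w e)" and "e \<in> U"
  shows "n e = 1"
proof -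
  have nonneg: "\<And>e. e \<in> U \<Longrightarrow> 0 \<le> (n e - 1) * w e"
    using assms(2,3) by (simp add: less_imp_le)
  have "(\<Sum>e\<in>U. (n e - 1) * w e) \<le> 0"
    using assms(4) by (simp add: left_diff_distrib sum_subtractf)
  moreover have "0 \<le> (\<Sum>e\<in>U. (n e - 1) * w e)" using nonneg by (rule sum_nonneg)
  ultimately have "(\<Sum>e\<in>U. (n e - 1) * w e) = 0" by linarith
  then have "(n e - 1) * w e = 0" using sum_nonneg_eq_0_iff[OF assms(1) nonneg] assms(5) by simp
  then show ?thesis using assms(2)[OF assms(5)] by simp
qed

section \<open>The auxiliary multigraph\<close>

locale co_tscmq_setting =
  fixes V :: "'v set" and E :: "'e set" and src dst :: "'e \<Rightarrow> 'v" and p w :: "'e \<Rightarrow> real"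
    and D :: "'v \<Rightarrow> 'v \<Rightarrow> 'e list \<times> 'e list"
  assumes ends_in_V: "\<And>e. e \<in> E \<Longrightarrow> src e \<in> V \<and> dst e \<in> V"
    and p_nonneg: "\<And>e. e \<in> E \<Longrightarrow> 0 \<le> p e" and p_less_1: "\<And>e. e \<in> E \<Longrightarrow> p e < 1"
    and w_pos: "\<And>e. e \<in> E \<Longrightarrow> 0 < w e"
    and edspop: "edspop_choice V E src dst w D"
begin

abbreviation tilde_walk :: "'v \<Rightarrow> ('v, 'e) tlink list \<Rightarrow> 'v \<Rightarrow> bool" where
  "tilde_walk \<equiv> walk (ttl src) (thd dst) (tE V E src dst)"

abbreviation surv_cost :: "'e \<Rightarrow> real" where
  "surv_cost e \<equiv> - ln (1 - p e)"

lemma ln_one_minus_p_le_0 [simp]: "e \<in> E \<Longrightarrow> ln (1 - p e) \<le> 0"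
  using p_nonneg[of e] p_less_1[of e] by simp

lemma w_nonneg: "e \<in> E \<Longrightarrow> 0 \<le> w e"
  using w_pos[of e] by simp

lemma DisjL_in_tE_iff: "DisjL u y \<in> tE V E src dst \<longleftrightarrow> u \<in> V \<and> y \<in> V \<and> (\<exists>ab. disj_pair src dst E u y ab)"
  by (auto simp: tE_def)

lemma edspop_disj_pair: "DisjL u y \<in> tE V E src dst \<Longrightarrow> disj_pair src dst E u y (D u y)"
  using edspop by (auto simp: edspop_choice_def DisjL_in_tE_iff)

lemma edspop_pair_weight_le:
  "u \<in> V \<Longrightarrow> y \<in> V \<Longrightarrow> disj_pair src dst E u y ab \<Longrightarrow> pair_weight w (D u y) \<le> pair_weight w ab"
  using edspop unfolding edspop_choice_def by blast

lemma pair_weight_nonneg: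
  assumes "disj_pair src dst E u y ab"
  shows "0 \<le> pair_weight w ab"
proof -
  have "set (fst ab) \<subseteq> E" "set (snd ab) \<subseteq> E"
    using assms unfolding disj_pair_def by (auto dest: simple_path_edges_subset)
  then show ?thesis
    unfolding pair_weight_def by (intro add_nonneg_nonneg sum_nonneg) (auto intro: less_imp_le w_pos)
qed

lemma tcost_nonneg: "l \<in> tE V E src dst \<Longrightarrow> 0 \<le> tcost p l"
  by (cases l) (auto simp: tE_def)

lemma tweight_nonneg: "l \<in> tE V E src dst \<Longrightarrow> 0 \<le> tweight w D l"
proof (cases l)
  case (DisjL u y)
  then show "l \<in> tE V E src dst \<Longrightarrow> 0 \<le> tweight w D l"
    using pair_weight_nonneg[OF edspop_disj_pair] by simp
qed (auto simp: tE_def less_imp_le w_pos)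

lemma sum_surv_cost_mono: "finite B \<Longrightarrow> A \<subseteq> B \<Longrightarrow> B \<subseteq> E \<Longrightarrow> (\<Sum>e\<in>A. surv_cost e) \<le> (\<Sum>e\<in>B. surv_cost e)"
  by (intro sum_mono2) auto

lemma sum_w_mono: "finite B \<Longrightarrow> A \<subseteq> B \<Longrightarrow> B \<subseteq> E \<Longrightarrow> (\<Sum>e\<in>A. w e) \<le> (\<Sum>e\<in>B. w e)"
  by (intro sum_mono2) (auto intro: w_nonneg)

lemma DisjL_weight_le:
  assumes "u \<in> V" "y \<in> V" "disj_pair src dst E u y (P1, Q1)"
    and "set P1 \<inter> (set Q1 \<union> set P2 \<union> set Q2) = {}" "set Q1 \<inter> (set P2 \<union> set Q2) = {}"
  shows "pair_weight w (D u y) + (\<Sum>e\<in>set P2 \<union> set Q2. w e) \<le> (\<Sum>e\<in>set (P1 @ P2) \<union> set (Q1 @ Q2). w e)"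
proof -
  have "set (P1 @ P2) \<union> set (Q1 @ Q2) = set P1 \<union> (set Q1 \<union> (set P2 \<union> set Q2))" by auto
  then have "(\<Sum>e\<in>set (P1 @ P2) \<union> set (Q1 @ Q2). w e) = pair_weight w (P1, Q1) + (\<Sum>e\<in>set P2 \<union> set Q2. w e)"
    using assms(4,5) by (simp add: pair_weight_def sum.union_disjoint Int_Un_distrib)
  then show ?thesis using edspop_pair_weight_le[OF assms(1-3)] by simp
qed

lemma tilde_walk_of_paths:
  assumes "u \<in> V" and "simple_path src dst E u P v" and "simple_path src dst E u Q v"
  shows "\<exists>tq. tilde_walk u tq v \<and>
    sum_list (map (tcost p) tq) \<le> (\<Sum>e\<in>set P \<inter> set Q. surv_cost e) \<and>
    sum_list (map (tweight w D) tq) \<le> (\<Sum>e\<in>set P \<union> set Q. w e)"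
  using assms
proof (induction "length P + length Q" arbitrary: u P Q rule: less_induct)
  case less
  have PQ_E: "set P \<union> set Q \<subseteq> E"
    using simple_path_edges_subset[OF less.prems(2)] simple_path_edges_subset[OF less.prems(3)] by simp
  from less.prems(2,3) show ?case
  proof (cases rule: simple_path_pair_cases)
    case empty
    then show ?thesis using less.prems by (intro exI[of _ "[]"]) auto
  next
    case (common e P' Q')
    then have e: "e \<in> E" "src e = u" "e \<notin> set P'" "e \<notin> set Q'"
      and paths: "simple_path src dst E (dst e) P' v" "simple_path src dst E (dst e) Q' v"
      using less.prems simple_path_distinct[OF less.prems(2)] simple_path_distinct[OF less.prems(3)]
      by (auto simp: simple_path_Cons)
    have "length P' + length Q' < length P + length Q" using common by simp
    from less.hyps[OF this _ paths] ends_in_V[OF e(1)] obtain tq where tq: "tilde_walk (dst e) tq v"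
      "sum_list (map (tcost p) tq) \<le> (\<Sum>e\<in>set P' \<inter> set Q'. surv_cost e)"
      "sum_list (map (tweight w D) tq) \<le> (\<Sum>e\<in>set P' \<union> set Q'. w e)" by blast
    have "set P \<inter> set Q = insert e (set P' \<inter> set Q')" "set P \<union> set Q = insert e (set P' \<union> set Q')"
      using common by auto
    then show ?thesis using tq e by (intro exI[of _ "SimpleL e # tq"]) (auto simp: tE_def)
  next
    case (meet y P1 P2 Q1 Q2)
    have "y \<in> V" using walk_end_in_dst[OF simple_path_walk[OF meet(4)] meet(3)] ends_in_V
      simple_path_edges_subset[OF meet(4)] by auto
    have disj: "disj_pair src dst E u y (P1, Q1)" using meet by (auto simp: disj_pair_def)
    have "length P2 + length Q2 < length P + length Q" using meet(1-3) by simp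
    from less.hyps[OF this \<open>y \<in> V\<close> meet(6,7)] obtain tq where tq: "tilde_walk y tq v"
      "sum_list (map (tcost p) tq) \<le> (\<Sum>e\<in>set P2 \<inter> set Q2. surv_cost e)"
      "sum_list (map (tweight w D) tq) \<le> (\<Sum>e\<in>set P2 \<union> set Q2. w e)" by blast
    have "(\<Sum>e\<in>set P2 \<inter> set Q2. surv_cost e) \<le> (\<Sum>e\<in>set P \<inter> set Q. surv_cost e)"
      using PQ_E meet(1,2) by (intro sum_surv_cost_mono) auto
    moreover have "tilde_walk u (DisjL u y # tq) v"
      using tq(1) less.prems(1) \<open>y \<in> V\<close> disj by (auto simp: DisjL_in_tE_iff)
    ultimately show ?thesis
      using tq DisjL_weight_le[OF less.prems(1) \<open>y \<in> V\<close> disj meet(8,9)] meet(1,2)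
      by (intro exI[of _ "DisjL u y # tq"]) auto
  next
    case (shorter P' Q')
    from less.hyps[OF shorter(3) less.prems(1) shorter(1,2)] obtain tq where "tilde_walk u tq v"
      "sum_list (map (tcost p) tq) \<le> (\<Sum>e\<in>set P' \<inter> set Q'. surv_cost e)"
      "sum_list (map (tweight w D) tq) \<le> (\<Sum>e\<in>set P' \<union> set Q'. w e)" by blast
    moreover have "(\<Sum>e\<in>set P' \<inter> set Q'. surv_cost e) \<le> (\<Sum>e\<in>set P \<inter> set Q. surv_cost e)"
      "(\<Sum>e\<in>set P' \<union> set Q'. w e) \<le> (\<Sum>e\<in>set P \<union> set Q. w e)"
      using PQ_E shorter(4,5) by (auto intro!: sum_surv_cost_mono sum_w_mono)
    ultimately show ?thesis by (intro exI[of _ tq]) auto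
  qed
qed

lemma feasible_conn_iff_cost_le:
  assumes "0 < S" and sP: "simple_path src dst E s P t" and sQ: "simple_path src dst E s Q t"
  shows "feasible_conn src dst E p s t S (set P) (set Q) \<longleftrightarrow> (\<Sum>e\<in>set P \<inter> set Q. surv_cost e) \<le> - ln S"
proof -
  have "set P \<inter> set Q \<subseteq> E" using simple_path_edges_subset[OF sP] by blast
  then have "S \<le> surv_level p (set P) (set Q) \<longleftrightarrow> (\<Sum>e\<in>set P \<inter> set Q. surv_cost e) \<le> - ln S"
    unfolding surv_level_def using assms(1) p_less_1
    by (intro le_prod_iff_sum_neg_ln_le) (auto simp: subset_iff)
  then show ?thesis using sP sQ by (auto simp: feasible_conn_def paths_def)
qed

lemma rsp_feasible_of_feasible_conn:
  assumes "s \<in> V" and "0 < S" and "feasible_conn src dst E p s t S \<pi>1 \<pi>2"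
  obtains tq where "rsp_feasible V E src dst p s t S tq" "sum_list (map (tweight w D) tq) \<le> W_CO w \<pi>1 \<pi>2"
proof -
  obtain P Q where sP: "simple_path src dst E s P t" and sQ: "simple_path src dst E s Q t"
    and \<pi>: "\<pi>1 = set P" "\<pi>2 = set Q"
    using assms(3) by (auto simp: feasible_conn_def paths_def)
  have cost: "(\<Sum>e\<in>set P \<inter> set Q. surv_cost e) \<le> - ln S"
    using feasible_conn_iff_cost_le[OF assms(2) sP sQ] assms(3) \<pi> by simp
  obtain tq0 where tq0: "tilde_walk s tq0 t"
    "sum_list (map (tcost p) tq0) \<le> (\<Sum>e\<in>set P \<inter> set Q. surv_cost e)"
    "sum_list (map (tweight w D) tq0) \<le> (\<Sum>e\<in>set P \<union> set Q. w e)"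
    using tilde_walk_of_paths[OF assms(1) sP sQ] by blast
  obtain tq where tq: "simple_path (ttl src) (thd dst) (tE V E src dst) s tq t" "subseq tq tq0"
    using walk_shortcut[OF tq0(1)] by blast
  have links: "set tq0 \<subseteq> tE V E src dst" using tq0(1) by (simp add: walk_subset_iff[of _ _ "tE V E src dst"])
  have "sum_list (map (tcost p) tq) \<le> sum_list (map (tcost p) tq0)"
    using links by (intro subseq_sum_list_le[OF tq(2)] tcost_nonneg) auto
  moreover have "sum_list (map (tweight w D) tq) \<le> sum_list (map (tweight w D) tq0)"
    using links by (intro subseq_sum_list_le[OF tq(2)] tweight_nonneg) auto
  ultimately have "rsp_feasible V E src dst p s t S tq"
      "sum_list (map (tweight w D) tq) \<le> W_CO w \<pi>1 \<pi>2"
    using tq0(2,3) cost tq(1) \<pi> by (auto simp: rsp_feasible_def W_CO_def)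
  then show thesis by (rule that)
qed

end

fun expand1 :: "('v \<Rightarrow> 'v \<Rightarrow> 'e list \<times> 'e list) \<Rightarrow> ('v, 'e) tlink \<Rightarrow> 'e list" where
  "expand1 D (SimpleL e) = [e]"
| "expand1 D (DisjL u v) = fst (D u v)"

fun expand2 :: "('v \<Rightarrow> 'v \<Rightarrow> 'e list \<times> 'e list) \<Rightarrow> ('v, 'e) tlink \<Rightarrow> 'e list" where
  "expand2 D (SimpleL e) = [e]"
| "expand2 D (DisjL u v) = snd (D u v)"

fun expand_shared :: "('v, 'e) tlink \<Rightarrow> 'e list" where
  "expand_shared (SimpleL e) = [e]"
| "expand_shared (DisjL u v) = []"

lemma build_eq_expand:
  "build D tp = (set (concat (map (expand1 D) tp)), set (concat (map (expand2 D) tp)))"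
proof -
  have "part1 D l = set (expand1 D l)" "part2 D l = set (expand2 D l)" for l
    by (cases l; simp)+
  then show ?thesis by (simp add: build_def)
qed

lemma sum_list_tcost_eq_expand_shared:
  "sum_list (map (tcost p) tp) = sum_list (map (\<lambda>e. - ln (1 - p e)) (concat (map expand_shared tp)))"
proof (induction tp)
  case (Cons l tp)
  then show ?case by (cases l) auto
qed simp

lemma count_expand_shared_le:
  "count_list (concat (map expand_shared tp)) e \<le> count_list (concat (map (expand1 D) tp)) e"
  "count_list (concat (map expand_shared tp)) e \<le> count_list (concat (map (expand2 D) tp)) e"
proof (induction tp)
  case (Cons l tp)
  case 1 then show ?case using Cons by (cases l) auto
next
  case (Cons l tp)
  case 2 then show ?case using Cons by (cases l) auto
qed simp_all

context co_tscmq_setting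
begin

lemma walk_expand_link:
  assumes "l \<in> tE V E src dst"
  shows "walk src dst E (ttl src l) (expand1 D l) (thd dst l) \<and> walk src dst E (ttl src l) (expand2 D l) (thd dst l)"
proof (cases l)
  case (SimpleL e)
  then show ?thesis using assms by (auto simp: tE_def)
next
  case (DisjL u v)
  then show ?thesis using edspop_disj_pair assms by (simp add: disj_pair_def simple_path_def)
qed

lemma walk_expand:
  assumes "tilde_walk u tp v"
  shows "walk src dst E u (concat (map (expand1 D) tp)) v \<and> walk src dst E u (concat (map (expand2 D) tp)) v"
  using assms
proof (induction tp arbitrary: u)
  case (Cons l tp)
  then show ?case using walk_expand_link[of l] by (auto simp: walk_append)
qed simp

lemma sum_list_tweight_eq_expand:
  assumes "tilde_walk u tp v"
  shows "sum_list (map (tweight w D) tp) = sum_list (map w (concat (map (expand1 D) tp))) +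
    sum_list (map w (concat (map (expand2 D) tp))) - sum_list (map w (concat (map expand_shared tp)))"
  using assms
proof (induction tp arbitrary: u)
  case (Cons l tp)
  then have IH: "sum_list (map (tweight w D) tp) = sum_list (map w (concat (map (expand1 D) tp))) +
      sum_list (map w (concat (map (expand2 D) tp))) - sum_list (map w (concat (map expand_shared tp)))"
    by auto
  show ?case
  proof (cases l)
    case (DisjL a b)
    then have "disj_pair src dst E a b (D a b)" using edspop_disj_pair Cons.prems by auto
    then have "distinct (fst (D a b))" "distinct (snd (D a b))"
      unfolding disj_pair_def by (auto dest: simple_path_distinct)
    then show ?thesis using IH DisjL by (simp add: pair_weight_def sum_list_distinct_conv_sum_set)
  qed (use IH in simp)
qed simp

lemma expand_shared_subset_E:
  "tilde_walk u tp v \<Longrightarrow> set (concat (map expand_shared tp)) \<subseteq> E"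
proof (induction tp arbitrary: u)
  case (Cons l tp)
  then show ?case by (cases l) (auto simp: tE_def)
qed simp

lemma connection_of_tilde_walk:
  assumes "tilde_walk u tp v"
  shows "\<exists>P Q. simple_path src dst E u P v \<and> simple_path src dst E u Q v \<and>
    set P \<inter> set Q \<subseteq> set (concat (map expand_shared tp)) \<and>
    set P \<union> set Q \<subseteq> set (concat (map (expand1 D) tp)) \<union> set (concat (map (expand2 D) tp))"
  using assms
proof (induction tp arbitrary: u)
  case Nil
  then show ?case by (intro exI[of _ "[]"]) auto
next
  case (Cons l tp)
  then have l: "l \<in> tE V E src dst" "ttl src l = u" and rest: "tilde_walk (thd dst l) tp v" by auto
  obtain P Q where PQ: "simple_path src dst E (thd dst l) P v" "simple_path src dst E (thd dst l) Q v"
    "set P \<inter> set Q \<subseteq> set (concat (map expand_shared tp))"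
    "set P \<union> set Q \<subseteq> set (concat (map (expand1 D) tp)) \<union> set (concat (map (expand2 D) tp))"
    using Cons.IH[OF rest] by blast
  show ?case
  proof (cases l)
    case (SimpleL e)
    then have "walk src dst E u (e # P) v" "walk src dst E u (e # Q) v"
      using l simple_path_walk[OF PQ(1)] simple_path_walk[OF PQ(2)] by (auto simp: tE_def)
    then obtain P' Q' where "simple_path src dst E u P' v" "subseq P' (e # P)"
      "simple_path src dst E u Q' v" "subseq Q' (e # Q)"
      using walk_shortcut by metis
    moreover from calculation have "set P' \<subseteq> insert e (set P)" "set Q' \<subseteq> insert e (set Q)"
      using subseq_set_subset by fastforce+
    ultimately show ?thesis using PQ(3,4) SimpleL by (intro exI[of _ P'] exI[of _ Q']) auto
  next
    case (DisjL a b)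
    then have "disj_pair src dst E u b (D u b)" using edspop_disj_pair l by auto
    then have "walk src dst E u (fst (D u b)) b" "walk src dst E u (snd (D u b)) b"
      "set (fst (D u b)) \<inter> set (snd (D u b)) = {}"
      by (auto simp: disj_pair_def simple_path_def)
    moreover have "walk src dst E b P v" "walk src dst E b Q v"
      using PQ(1,2) DisjL by (simp_all add: simple_path_def)
    ultimately obtain P' Q' where "simple_path src dst E u P' v" "simple_path src dst E u Q' v"
        "set P' \<inter> set Q' \<subseteq> set P \<inter> set Q"
        "set P' \<union> set Q' \<subseteq> set (fst (D u b)) \<union> set (snd (D u b)) \<union> set P \<union> set Q"
      using two_paths_concat by metis
    then show ?thesis using PQ(3,4) DisjL l(2) by (intro exI[of _ P'] exI[of _ Q']) auto
  qed
qed

lemma feasible_conn_of_shared_subset: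
  assumes "0 < S" and feas: "rsp_feasible V E src dst p s t S tp"
    and sP: "simple_path src dst E s P t" and sQ: "simple_path src dst E s Q t"
    and shared: "set P \<inter> set Q \<subseteq> set (concat (map expand_shared tp))"
  shows "feasible_conn src dst E p s t S (set P) (set Q)"
proof -
  have walk: "tilde_walk s tp t" using feas by (simp add: rsp_feasible_def simple_path_def)
  note T_E = expand_shared_subset_E[OF walk]
  have "(\<Sum>e\<in>set P \<inter> set Q. surv_cost e) \<le> (\<Sum>e\<in>set (concat (map expand_shared tp)). surv_cost e)"
    using shared T_E by (intro sum_surv_cost_mono) auto
  also have "\<dots> \<le> sum_list (map surv_cost (concat (map expand_shared tp)))"
    using T_E by (intro sum_set_le_sum_list) auto
  also have "\<dots> \<le> - ln S"
    using feas by (simp add: rsp_feasible_def sum_list_tcost_eq_expand_shared)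
  finally show ?thesis using feasible_conn_iff_cost_le[OF assms(1) sP sQ] by simp
qed

lemma shared_walk_advances:
  assumes tp: "tilde_walk s tp t" and "distinct (s # map (thd dst) tp)"
  shows "\<gamma> \<noteq> [] \<Longrightarrow> walk src dst UNIV z \<gamma> z' \<Longrightarrow> set \<gamma> \<subseteq> set (concat (map expand_shared tp)) \<Longrightarrow>
     \<exists>i j. i < j \<and> j \<le> length tp \<and> (s # map (thd dst) tp) ! i = z \<and> (s # map (thd dst) tp) ! j = z'"
proof (induction \<gamma> arbitrary: z)
  case (Cons e \<gamma>)
  let ?ns = "s # map (thd dst) tp"
  have "SimpleL e \<in> set tp"
  proof -
    obtain l where l: "l \<in> set tp" "e \<in> set (expand_shared l)" using Cons.prems(3) by auto
    moreover have "l = SimpleL e" using l(2) by (cases l) auto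
    ultimately show ?thesis by simp
  qed
  then obtain k where k: "k < length tp" "tp ! k = SimpleL e" by (metis in_set_conv_nth)
  have src_e: "src e = ?ns ! k" using walk_nth_src[OF tp k(1)] k(2) by simp
  have dst_e: "dst e = ?ns ! Suc k" using k by simp
  have z: "z = src e" and rest: "walk src dst UNIV (dst e) \<gamma> z'" using Cons.prems(2) by auto
  show ?case
  proof (cases "\<gamma> = []")
    case True
    then show ?thesis using rest src_e dst_e z k(1) by (intro exI[of _ k] exI[of _ "Suc k"]) auto
  next
    case False
    from Cons.IH[OF False rest] Cons.prems(3) obtain i j where ij: "i < j" "j \<le> length tp"
      "?ns ! i = dst e" "?ns ! j = z'" by auto
    have "i = Suc k" using ij(1-3) dst_e assms(2) k(1) nth_eq_iff_index_eq[of ?ns i "Suc k"] by simp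
    then show ?thesis using ij src_e z by (intro exI[of _ k] exI[of _ j]) auto
  qed
qed simp

lemma no_shared_cycle:
  assumes "simple_path (ttl src) (thd dst) (tE V E src dst) s tp t"
    and "walk src dst E z \<gamma> z" and "\<gamma> \<noteq> []" and "set \<gamma> \<subseteq> set (concat (map expand_shared tp))"
  shows False
proof -
  have tp: "tilde_walk s tp t" "distinct (s # map (thd dst) tp)" using assms(1) by (simp_all add: simple_path_def)
  have "walk src dst UNIV z \<gamma> z" using assms(2) by (simp add: walk_subset_iff[of _ _ E])
  from shared_walk_advances[OF tp assms(3) this assms(4)] obtain i j where
    "i < j" "j \<le> length tp" "(s # map (thd dst) tp) ! i = z" "(s # map (thd dst) tp) ! j = z" by blast
  then show False using tp(2) nth_eq_iff_index_eq[of "s # map (thd dst) tp" i j] by simp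
qed

lemma feasible_conn_of_rsp_feasible:
  assumes "0 < S" and "rsp_feasible V E src dst p s t S tp"
  shows "\<exists>\<pi>1 \<pi>2. feasible_conn src dst E p s t S \<pi>1 \<pi>2"
proof -
  have "tilde_walk s tp t" using assms(2) by (simp add: rsp_feasible_def simple_path_def)
  from connection_of_tilde_walk[OF this] obtain P Q where "simple_path src dst E s P t"
    "simple_path src dst E s Q t" "set P \<inter> set Q \<subseteq> set (concat (map expand_shared tp))" by blast
  from feasible_conn_of_shared_subset[OF assms this] show ?thesis by blast
qed

end

section \<open>Optimal paths of the auxiliary multigraph\<close>

locale co_tscmq_optimum = co_tscmq_setting V E src dst p w D
  for V :: "'v set" and E :: "'e set" and src dst :: "'e \<Rightarrow> 'v" and p w :: "'e \<Rightarrow> real"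
    and D :: "'v \<Rightarrow> 'v \<Rightarrow> 'e list \<times> 'e list" +
  fixes s t :: 'v and S :: real and tp :: "('v, 'e) tlink list"
  assumes s_in_V: "s \<in> V" and S_pos: "0 < S" and optimal: "rsp_optimal V E src dst p w D s t S tp"
begin

abbreviation path1 :: "'e list" where "path1 \<equiv> concat (map (expand1 D) tp)"
abbreviation path2 :: "'e list" where "path2 \<equiv> concat (map (expand2 D) tp)"
abbreviation shared :: "'e list" where "shared \<equiv> concat (map expand_shared tp)"
abbreviation weight :: real where "weight \<equiv> sum_list (map (tweight w D) tp)"

lemma rsp_feasible_tp: "rsp_feasible V E src dst p s t S tp"
  using optimal by (simp add: rsp_optimal_def)

lemma simple_path_tp: "simple_path (ttl src) (thd dst) (tE V E src dst) s tp t"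
  using rsp_feasible_tp by (simp add: rsp_feasible_def)

lemma tilde_walk_tp: "tilde_walk s tp t"
  using simple_path_tp by (simp add: simple_path_def)

lemma walk_path1: "walk src dst E s path1 t" and walk_path2: "walk src dst E s path2 t"
  using walk_expand[OF tilde_walk_tp] by simp_all

lemma paths_subset_E: "set path1 \<union> set path2 \<subseteq> E"
  using walk_path1 walk_path2 by (simp add: walk_subset_iff[of _ _ E])

lemma weight_le_W_CO:
  assumes "feasible_conn src dst E p s t S \<rho>1 \<rho>2"
  shows "weight \<le> W_CO w \<rho>1 \<rho>2"
proof -
  obtain tq where "rsp_feasible V E src dst p s t S tq" "sum_list (map (tweight w D) tq) \<le> W_CO w \<rho>1 \<rho>2"
    using rsp_feasible_of_feasible_conn[OF s_in_V S_pos assms] by blast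
  moreover from this(1) have "weight \<le> sum_list (map (tweight w D) tq)"
    using optimal by (simp add: rsp_optimal_def)
  ultimately show ?thesis by linarith
qed

lemma weight_le_if_shared_subset:
  assumes "simple_path src dst E s P t" "simple_path src dst E s Q t"
    and "set P \<inter> set Q \<subseteq> set shared"
  shows "weight \<le> (\<Sum>e\<in>set P \<union> set Q. w e)"
  using weight_le_W_CO[OF feasible_conn_of_shared_subset[OF S_pos rsp_feasible_tp assms]]
  by (simp add: W_CO_def)

lemma weight_le_sum_paths: "weight \<le> (\<Sum>e\<in>set path1 \<union> set path2. w e)"
proof -
  obtain P Q where PQ: "simple_path src dst E s P t" "simple_path src dst E s Q t"
    "set P \<inter> set Q \<subseteq> set shared" "set P \<union> set Q \<subseteq> set path1 \<union> set path2"
    using connection_of_tilde_walk[OF tilde_walk_tp] by blast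
  have "weight \<le> (\<Sum>e\<in>set P \<union> set Q. w e)" using weight_le_if_shared_subset[OF PQ(1-3)] .
  also have "\<dots> \<le> (\<Sum>e\<in>set path1 \<union> set path2. w e)"
    using PQ(4) paths_subset_E by (intro sum_w_mono) auto
  finally show ?thesis .
qed

lemma set_shared_subset_path1: "set shared \<subseteq> set path1"
proof
  fix e assume "e \<in> set shared"
  then have "0 < count_list path1 e"
    using count_list_0_iff[of shared e] count_expand_shared_le(1)[of tp e D] by linarith
  then show "e \<in> set path1" using count_list_0_iff[of path1 e] by auto
qed

lemma weight_eq_sum_multiplicity:
  "weight = (\<Sum>e\<in>set path1 \<union> set path2.
     (real (count_list path1 e) + real (count_list path2 e) - real (count_list shared e)) * w e)"
proof -
  let ?U = "set path1 \<union> set path2"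
  have "weight = (\<Sum>e\<in>?U. real (count_list path1 e) * w e) + (\<Sum>e\<in>?U. real (count_list path2 e) * w e)
      - (\<Sum>e\<in>?U. real (count_list shared e) * w e)"
    using sum_list_tweight_eq_expand[OF tilde_walk_tp] set_shared_subset_path1
      sum_list_map_eq_sum_count_real[of path1 ?U w] sum_list_map_eq_sum_count_real[of path2 ?U w]
      sum_list_map_eq_sum_count_real[of shared ?U w]
    by auto
  then show ?thesis by (simp add: algebra_simps sum.distrib sum_subtractf)
qed

lemma count_paths_eq:
  assumes "e \<in> set path1 \<union> set path2"
  shows "count_list path1 e + count_list path2 e = count_list shared e + 1"
proof -
  let ?U = "set path1 \<union> set path2"
  define n where "n e = real (count_list path1 e) + real (count_list path2 e) - real (count_list shared e)" for e
  have "(\<Sum>e\<in>?U. n e * w e) \<le> (\<Sum>e\<in>?U. w e)"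
    using weight_eq_sum_multiplicity weight_le_sum_paths by (simp add: n_def)
  moreover have "1 \<le> n e" if "e \<in> ?U" for e
  proof -
    have "count_list path1 e \<noteq> 0 \<or> count_list path2 e \<noteq> 0"
      using that count_list_0_iff[of path1 e] count_list_0_iff[of path2 e] by auto
    then show ?thesis using count_expand_shared_le[of tp e D] unfolding n_def by (elim disjE) linarith+
  qed
  moreover have "0 < w e" if "e \<in> ?U" for e using that paths_subset_E w_pos by blast
  ultimately have "n e = 1" using weighted_sum_le_sum_imp_eq_1[of ?U w n] assms by blast
  then show ?thesis unfolding n_def by linarith
qed

lemma count_paths_le_1: "count_list path1 e \<le> 1" "count_list path2 e \<le> 1"
proof -
  have "count_list path1 e \<le> 1 \<and> count_list path2 e \<le> 1"
  proof (cases "e \<in> set path1 \<union> set path2")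
    case True
    then show ?thesis using count_paths_eq[OF True] count_expand_shared_le[of tp e D] by linarith
  qed (simp add: count_list_0_iff)
  then show "count_list path1 e \<le> 1" "count_list path2 e \<le> 1" by simp_all
qed

lemma distinct_path1: "distinct path1" and distinct_path2: "distinct path2"
  by (intro distinct_if_count_list_le_1 count_paths_le_1)+

lemma paths_inter_subset_shared: "set path1 \<inter> set path2 \<subseteq> set shared"
proof
  fix e assume e: "e \<in> set path1 \<inter> set path2"
  then have "count_list path1 e \<noteq> 0" "count_list path2 e \<noteq> 0" by (simp_all add: count_list_0_iff)
  with count_paths_eq[of e] e have "count_list shared e \<noteq> 0" by auto
  then show "e \<in> set shared" by (simp add: count_list_0_iff)
qed

lemma W_CO_paths: "W_CO w (set path1) (set path2) = weight"
  unfolding W_CO_def weight_eq_sum_multiplicity using count_paths_eq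
  by (intro sum.cong) (simp_all add: algebra_simps flip: of_nat_add)

text \<open>A closed subwalk of \<open>Y\<close> contains an edge outside \<open>shared\<close>; dropping it leaves
  a pair with the same shared edges that is strictly cheaper than \<open>weight\<close>.\<close>

lemma walk_distinct_nodes_if_cover:
  assumes Y: "walk src dst E s Y t" and Z: "walk src dst E s Z t" and "distinct Y"
    and cover: "set Y \<union> set Z = set path1 \<union> set path2" and inter: "set Y \<inter> set Z \<subseteq> set shared"
  shows "distinct (s # map dst Y)"
proof (rule ccontr)
  assume "\<not> distinct (s # map dst Y)"
  then obtain Y1 cyc Y2 z where Y_split: "Y = Y1 @ cyc @ Y2" "cyc \<noteq> []"
    "walk src dst E s Y1 z" "walk src dst E z cyc z" "walk src dst E z Y2 t"
    using walk_decompose_cycle[OF Y] by metis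
  obtain g where g: "g \<in> set cyc" "g \<notin> set shared"
    using no_shared_cycle[OF simple_path_tp Y_split(4,2)] by blast
  have "g \<notin> set (Y1 @ Y2)" "g \<notin> set Z" using g Y_split(1) \<open>distinct Y\<close> inter by auto
  have "walk src dst E s (Y1 @ Y2) t" using Y_split(3,5) by (auto simp: walk_append)
  then obtain P where P: "simple_path src dst E s P t" "subseq P (Y1 @ Y2)" using walk_shortcut by metis
  obtain Q where Q: "simple_path src dst E s Q t" "subseq Q Z" using walk_shortcut[OF Z] by blast
  have PQ: "set P \<subseteq> set (Y1 @ Y2)" "set Q \<subseteq> set Z"
    using subseq_set_subset[OF P(2)] subseq_set_subset[OF Q(2)] .
  have "weight \<le> (\<Sum>e\<in>set P \<union> set Q. w e)"
    using weight_le_if_shared_subset[OF P(1) Q(1)] PQ inter Y_split(1) by auto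
  also have "\<dots> \<le> (\<Sum>e\<in>(set path1 \<union> set path2) - {g}. w e)"
    using PQ cover Y_split(1) \<open>g \<notin> set (Y1 @ Y2)\<close> \<open>g \<notin> set Z\<close> paths_subset_E
    by (intro sum_w_mono) auto
  also have "\<dots> < (\<Sum>e\<in>set path1 \<union> set path2. w e)"
  proof -
    have "g \<in> set path1 \<union> set path2" using g(1) Y_split(1) cover by auto
    then show ?thesis using sum_diff1[of "set path1 \<union> set path2" w g] paths_subset_E w_pos by auto
  qed
  also have "\<dots> = weight" using W_CO_paths by (simp add: W_CO_def)
  finally show False by simp
qed

lemma simple_path_path1: "simple_path src dst E s path1 t"
  using walk_distinct_nodes_if_cover[OF walk_path1 walk_path2 distinct_path1 refl paths_inter_subset_shared]
    walk_path1 by (simp add: simple_path_def)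

lemma simple_path_path2: "simple_path src dst E s path2 t"
  using walk_distinct_nodes_if_cover[OF walk_path2 walk_path1 distinct_path2 Un_commute]
    paths_inter_subset_shared walk_path2 by (simp add: simple_path_def Int_commute)

lemma co_csmq_optimal_paths: "co_csmq_optimal src dst E p w s t S (set path1) (set path2)"
  using feasible_conn_of_shared_subset[OF S_pos rsp_feasible_tp simple_path_path1 simple_path_path2 paths_inter_subset_shared]
    weight_le_W_CO W_CO_paths
  by (simp add: co_csmq_optimal_def)

end

lemma S_min_pos: "network V E src dst p pmax w \<Longrightarrow> 0 < S_min E pmax"
  by (simp add: network_def S_min_def)

lemma co_tscmq_setting_of_network:
  "network V E src dst p pmax w \<Longrightarrow> edspop_choice V E src dst w D \<Longrightarrow> co_tscmq_setting V E src dst p w D"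
  by unfold_locales (auto simp: network_def intro: less_imp_le le_less_trans)

theorem theorem3:
  fixes V :: "'v set" and E :: "'e set" and src dst :: "'e \<Rightarrow> 'v"
    and p w :: "'e \<Rightarrow> real" and pmax S :: real and s t :: 'v
    and res :: "('e set \<times> 'e set) option"
  assumes "network V E src dst p pmax w"
    and "s \<in> V" and "t \<in> V"
    and "S_min E pmax \<le> S" and "S \<le> 1"
    and "co_tscmq V E src dst p w s t S res"
  shows "((\<exists>\<pi>1 \<pi>2. feasible_conn src dst E p s t S \<pi>1 \<pi>2) \<longrightarrow>
            (\<exists>\<pi>1 \<pi>2. res = Some (\<pi>1, \<pi>2) \<and> co_csmq_optimal src dst E p w s t S \<pi>1 \<pi>2))
       \<and> ((\<not> (\<exists>\<pi>1 \<pi>2. feasible_conn src dst E p s t S \<pi>1 \<pi>2)) \<longrightarrow> res = None)"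
proof -
  have S_pos: "0 < S" using S_min_pos[OF assms(1)] assms(4) by linarith
  obtain D where D: "edspop_choice V E src dst w D"
    and outcome: "if \<exists>tp. rsp_feasible V E src dst p s t S tp
      then \<exists>tp. rsp_optimal V E src dst p w D s t S tp \<and> res = Some (build D tp) else res = None"
    using assms(6) unfolding co_tscmq_def by blast
  interpret co_tscmq_setting V E src dst p w D by (rule co_tscmq_setting_of_network[OF assms(1) D])
  show ?thesis
  proof (intro conjI impI)
    assume "\<exists>\<pi>1 \<pi>2. feasible_conn src dst E p s t S \<pi>1 \<pi>2"
    with outcome obtain tp where opt: "rsp_optimal V E src dst p w D s t S tp" and "res = Some (build D tp)"
      using rsp_feasible_of_feasible_conn[OF assms(2) S_pos] by (metis (full_types))
    interpret co_tscmq_optimum V E src dst p w D s t S tp using assms(2) S_pos opt by unfold_locales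
    show "\<exists>\<pi>1 \<pi>2. res = Some (\<pi>1, \<pi>2) \<and> co_csmq_optimal src dst E p w s t S \<pi>1 \<pi>2"
      using co_csmq_optimal_paths \<open>res = Some (build D tp)\<close> by (simp add: build_eq_expand)
  next
    assume "\<not> (\<exists>\<pi>1 \<pi>2. feasible_conn src dst E p s t S \<pi>1 \<pi>2)"
    then have "\<not> (\<exists>tp. rsp_feasible V E src dst p s t S tp)"
      using feasible_conn_of_rsp_feasible[OF S_pos] by blast
    with outcome show "res = None" by simp
  qed
qed

end
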